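(* Fix $\alpha>2$, $\beta>0$, $d>0$ and an integer $D\ge0$, and let $c_1:=\frac{2\pi^2}{\alpha}\csc\!\left(\frac{2\pi}{\alpha}\right)$. For $\lambda>0$ and positive integers $N$ define $$q_\lambda(N):=1-\exp\!\Big(-c_1\lambda\big(\tfrac{d}{N}\big)^2\beta^{2/\alpha}\Big),\qquad g_\lambda(N):=\frac{\Big(1-q_\lambda(N)^{\lfloor D/N\rfloor+1}\Big)^N}{D+N}.$$ Then there exists $\lambda_0>0$ such that for every $\lambda\in(0,\lambda_0)$, $N=1$ is the unique maximizer of $g_\lambda(N)$ over all positive integers $N$.
   Context: $g_\lambda(N)$ is (up to the constant factor $\lambda R$) the lower bound on the transmission capacity of an $N$-hop ad hoc network with equidistant hops of length $d/N$, ALOHA access probability $p=1$, active transmitter density $\lambda$, SIR threshold $\beta$, path-loss exponent $\alpha$, end-to-end retransmission budget $D$ split as $\lfloor D/N\rfloor$ per hop, and the end-to-end delay bounded by $D+N$; $q_\lambda(N)$ is the per-hop single-slot outage probability. *)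

theory Defs
  imports "HOL-Analysis.Analysis"
begin

definition c1 :: "real \<Rightarrow> real" where
  "c1 \<alpha> = (2 * pi^2 / \<alpha>) * (1 / sin (2 * pi / \<alpha>))"

definition q_out :: "real \<Rightarrow> real \<Rightarrow> real \<Rightarrow> real \<Rightarrow> nat \<Rightarrow> real" where
  "q_out \<alpha> \<beta> d lam N =
     1 - exp (- (c1 \<alpha> * lam * (d / real N)^2 * \<beta> powr (2 / \<alpha>)))"

definition g_tc :: "real \<Rightarrow> real \<Rightarrow> real \<Rightarrow> nat \<Rightarrow> real \<Rightarrow> nat \<Rightarrow> real" where
  "g_tc \<alpha> \<beta> d D lam N =
     (1 - q_out \<alpha> \<beta> d lam N ^ (D div N + 1)) ^ N / real (D + N)"

end

theory Submission
  imports Defs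
begin

(*
  Write q(N) = 1 - exp (-(c * lam / N^2)) with the positive constant
  c = c1(alpha) * d^2 * beta^(2/alpha).  Since every success probability is at most 1,
  the throughput of an N-hop route is at most 1/(D+N), hence at most 1/(D+2) once N >= 2.
  For a single hop, g(1) = (1 - q(1)^(D+1))/(D+1), and this exceeds 1/(D+2) as soon as
  q(1) < 1/(D+2).  Because 1 - exp(-x) <= x, this holds whenever c * lam < 1/(D+2),
  so lam0 = 1/(c (D+2)) works.
*)

lemma c1_pos:
  assumes "\<alpha> > 2"
  shows "c1 \<alpha> > 0"
proof -
  have "0 < 2 * pi / \<alpha>" "2 * pi / \<alpha> < pi"
    using assms by (simp_all add: divide_less_eq)
  then have "sin (2 * pi / \<alpha>) > 0" by (rule sin_gt_zero)
  then show ?thesis using assms unfolding c1_def by simp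
qed

definition outage_rate :: "real \<Rightarrow> real \<Rightarrow> real \<Rightarrow> real" where
  "outage_rate \<alpha> \<beta> d = c1 \<alpha> * d^2 * \<beta> powr (2 / \<alpha>)"

lemma outage_rate_pos:
  assumes "\<alpha> > 2" and "\<beta> > 0" and "d > 0"
  shows "outage_rate \<alpha> \<beta> d > 0"
  using c1_pos[OF assms(1)] assms unfolding outage_rate_def by simp

lemma q_out_eq:
  "q_out \<alpha> \<beta> d lam N = 1 - exp (- (outage_rate \<alpha> \<beta> d * lam / (real N)^2))"
  unfolding q_out_def outage_rate_def by (simp add: power_divide field_simps)

lemma one_minus_exp_bounds:
  fixes x :: real
  assumes "x \<ge> 0"
  shows "0 \<le> 1 - exp (- x)" "1 - exp (- x) < 1" "1 - exp (- x) \<le> x"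
proof -
  show "0 \<le> 1 - exp (- x)" using assms by simp
  show "1 - exp (- x) < 1" by simp
  show "1 - exp (- x) \<le> x" using exp_ge_add_one_self[of "- x"] by simp
qed

lemma throughput_le:
  fixes q :: real
  assumes "0 \<le> q" and "q \<le> 1"
  shows "(1 - q ^ k) ^ N / real (D + N) \<le> 1 / real (D + N)"
proof -
  have "0 \<le> q ^ k" "q ^ k \<le> 1" using assms by (simp_all add: power_le_one)
  then have "(1 - q ^ k) ^ N \<le> 1" by (intro power_le_one) auto
  then show ?thesis by (simp add: divide_right_mono)
qed

lemma single_hop_throughput_gt:
  fixes q :: real
  assumes "0 \<le> q" and "q < 1 / (real D + 2)"
  shows "1 / (real D + 2) < (1 - q ^ (D + 1)) / (real D + 1)"
proof -
  have "q < 1" using assms(2) by (smt (verit) divide_le_eq_1_pos of_nat_0_le_iff)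
  then have "q ^ (D + 1) \<le> q"
    using assms(1) by (simp add: power_le_one mult_left_le)
  then have "q ^ (D + 1) < 1 / (real D + 2)" using assms(2) by linarith
  then show ?thesis by (simp add: field_simps)
qed

theorem proposition7:
  fixes \<alpha> \<beta> d :: real and D :: nat
  assumes "\<alpha> > 2" and "\<beta> > 0" and "d > 0"
  shows "\<exists>lam0>0. \<forall>lam. 0 < lam \<and> lam < lam0 \<longrightarrow>
           (\<forall>N::nat. N \<ge> 1 \<and> N \<noteq> 1 \<longrightarrow> g_tc \<alpha> \<beta> d D lam N < g_tc \<alpha> \<beta> d D lam 1)"
proof -
  define c where "c = outage_rate \<alpha> \<beta> d"
  have c: "c > 0" using outage_rate_pos[OF assms] by (simp add: c_def)
  show ?thesis
  proof (intro exI[of _ "1 / (c * (real D + 2))"] conjI allI impI)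
    show "0 < 1 / (c * (real D + 2))" using c by simp
    fix lam :: real and N :: nat
    assume lam: "0 < lam \<and> lam < 1 / (c * (real D + 2))" and N: "1 \<le> N \<and> N \<noteq> 1"
    have q: "0 \<le> q_out \<alpha> \<beta> d lam n" "q_out \<alpha> \<beta> d lam n < 1"
      "q_out \<alpha> \<beta> d lam n \<le> c * lam / (real n)^2" for n
      using one_minus_exp_bounds[of "c * lam / (real n)^2"] c lam
      unfolding q_out_eq c_def by auto
    have "c * lam < 1 / (real D + 2)"
      using lam c by (simp add: pos_less_divide_eq mult_ac)
    then have "q_out \<alpha> \<beta> d lam 1 < 1 / (real D + 2)" using q(3)[of 1] by simp
    then have "1 / (real D + 2) < g_tc \<alpha> \<beta> d D lam 1"
      using single_hop_throughput_gt q(1) unfolding g_tc_def by (simp add: add.commute)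
    moreover have "g_tc \<alpha> \<beta> d D lam N \<le> 1 / (real D + 2)"
    proof -
      have "g_tc \<alpha> \<beta> d D lam N \<le> 1 / real (D + N)"
        unfolding g_tc_def using throughput_le q(1,2) less_imp_le by blast
      also have "\<dots> \<le> 1 / (real D + 2)" using N by (simp add: frac_le)
      finally show ?thesis .
    qed
    ultimately show "g_tc \<alpha> \<beta> d D lam N < g_tc \<alpha> \<beta> d D lam 1" by linarith
  qed
qed

end
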